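(* Let $q=p^f$ be a prime power, $N>1$ an integer with $N\mid(q-1)$, $\gamma$ a primitive element of $\mathbb{F}_q$, and $C_0=\langle\gamma^N\rangle$. Assume the Gauss periods $\eta_a=\sum_{x\in\gamma^aC_0}\psi(x)$, $0\le a\le N-1$, take exactly $\ell$ distinct values $\alpha_1,\dots,\alpha_\ell$, and let $I_i=\{a\in\mathbb{Z}_N:\eta_a=\alpha_i\}$ for $1\le i\le\ell$. Then each $I_i$ is invariant under multiplication by $p$ in $\mathbb{Z}_N$. Moreover, if $m:=\gcd\{\mathrm{ord}_n(p): n>1,\ n\mid N\}\ge 2$, then there is a unique $i_0\in\{1,\dots,\ell\}$ such that $|I_{i_0}|\equiv1\pmod m$ and $|I_i|\equiv 0\pmod m$ for all $i\ne i_0$.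
   Context: $\psi$ is the canonical additive character of $\mathbb{F}_q$: $\psi(x)=\xi_p^{\mathrm{Tr}_{q/p}(x)}$. $\mathrm{ord}_n(p)$ is the multiplicative order of $p$ modulo $n$. *)

theory Defs
  imports "HOL-Analysis.Analysis" "HOL-Number_Theory.Number_Theory"
begin

definition abs_trace :: "nat \<Rightarrow> nat \<Rightarrow> 'a::field \<Rightarrow> 'a" where
  "abs_trace p f x = (\<Sum>i<f. x ^ (p ^ i))"

text \<open>The trace lies in the prime field F_p = image of 0..p-1; we identify it with
  the least natural number k whose image is the trace.\<close>
definition trace_nat :: "nat \<Rightarrow> nat \<Rightarrow> 'a::field \<Rightarrow> nat" where
  "trace_nat p f x = (LEAST k. of_nat k = abs_trace p f x)"

definition can_add_char :: "nat \<Rightarrow> nat \<Rightarrow> 'a::field \<Rightarrow> complex" where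
  "can_add_char p f x = exp (2 * pi * \<i> * of_nat (trace_nat p f x) / of_nat p)"

definition primitive_elem :: "'a::field \<Rightarrow> bool" where
  "primitive_elem g \<longleftrightarrow> range (\<lambda>k::nat. g ^ k) = UNIV - {0}"

definition cyclo_C0 :: "nat \<Rightarrow> 'a::field \<Rightarrow> 'a set" where
  "cyclo_C0 N g = range (\<lambda>j::nat. (g ^ N) ^ j)"

definition gauss_period :: "nat \<Rightarrow> nat \<Rightarrow> nat \<Rightarrow> 'a::field \<Rightarrow> nat \<Rightarrow> complex" where
  "gauss_period p f N g a = (\<Sum>x \<in> (\<lambda>c. g ^ a * c) ` cyclo_C0 N g. can_add_char p f x)"

end

theory Submission
  imports Defs
begin

(* The Frobenius map x \<mapsto> x^p permutes the field, fixes the trace and hence \<psi>, and maps the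
   coset \<gamma>^a C_0 onto \<gamma>^(pa) C_0; so \<eta>_(pa) = \<eta>_a and every I_i is a union of p-cyclotomic
   cosets modulo N. The coset of a \<noteq> 0 has exactly ord_n(p) elements with n = N / gcd(a, N) > 1,
   a multiple of m. Only the coset {0} escapes, and it lies in the class of \<eta>_0. *)

lemma cong_mult_cancel_gcd_nat:
  fixes a x y N :: nat
  assumes "a > 0"
  shows "[a * x = a * y] (mod N) \<longleftrightarrow> [x = y] (mod N div gcd a N)"
proof -
  define g where "g = gcd a N"
  obtain a' n where a: "a = g * a'" and N: "N = g * n" and "coprime a' n"
    using gcd_coprime_exists[of a N] assms unfolding g_def by (auto simp: ac_simps)
  have "g > 0" using assms unfolding g_def by simp
  have "N div gcd a N = n"
    using \<open>g > 0\<close> N unfolding g_def[symmetric] by simp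
  have "[a * x = a * y] (mod N) \<longleftrightarrow> [a' * x = a' * y] (mod n)"
    unfolding a N cong_def using \<open>g > 0\<close> by (simp add: mult.assoc mod_mult_mult1)
  also have "\<dots> \<longleftrightarrow> [x = y] (mod n)"
    using \<open>coprime a' n\<close> by (rule cong_mult_lcancel_nat)
  finally show ?thesis
    unfolding \<open>N div gcd a N = n\<close> .
qed

lemma div_gcd_dvd: "N div gcd a N dvd (N::nat)"
  by (metis dvd_mult_div_cancel dvd_triv_right gcd_dvd2)

lemma div_gcd_gt_1:
  fixes a N :: nat
  assumes "0 < a" "a < N"
  shows "1 < N div gcd a N"
proof -
  have g: "0 < gcd a N" "gcd a N < N"
    using assms gcd_le1_nat[of a N] by (auto simp del: gcd_le1_nat)
  have "N div gcd a N \<noteq> 1"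
  proof
    assume "N div gcd a N = 1"
    then have "N = gcd a N"
      by (metis dvd_mult_div_cancel gcd_dvd2 mult.right_neutral)
    with g show False by simp
  qed
  moreover have "N div gcd a N \<noteq> 0"
    using g by (simp add: div_greater_zero_iff)
  ultimately show ?thesis
    by linarith
qed

lemma ord_div_gcd_pos:
  fixes N p a :: nat
  assumes "coprime p N"
  shows "ord (N div gcd a N) p > 0"
proof -
  have "coprime (N div gcd a N) p"
    using assms by (intro coprime_divisors[OF div_gcd_dvd dvd_refl]) (simp add: coprime_commute)
  then show ?thesis
    by simp
qed

definition cyclotomic_coset :: "nat \<Rightarrow> nat \<Rightarrow> nat \<Rightarrow> nat set" where
  "cyclotomic_coset N p a = range (\<lambda>k. a * p ^ k mod N)"

lemma coprime_if_dvd_power_minus_one: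
  fixes p f N :: nat
  assumes "0 < p" "0 < f" "N dvd p ^ f - 1"
  shows "coprime p N"
proof (rule coprime_divisors)
  show "p dvd p ^ f"
    using assms(2) by simp
  show "coprime (p ^ f) (p ^ f - 1)"
    by (rule coprime_diff_one_right_nat) (use assms(1) in simp)
qed (fact assms(3))

lemma mult_mod_pos:
  fixes p a N :: nat
  assumes "coprime p N" "0 < a" "a < N"
  shows "0 < p * a mod N"
proof (rule ccontr)
  assume "\<not> 0 < p * a mod N"
  then have "[p * a = p * 0] (mod N)"
    by (simp add: cong_def)
  then have "[a = 0] (mod N)"
    using cong_mult_lcancel_nat[OF assms(1)] by blast
  with assms(2,3) show False
    by (simp add: cong_def)
qed

lemma mult_power_mod_eq_iff:
  fixes N p a :: nat
  assumes "coprime p N" "a > 0"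
  shows "a * p ^ i mod N = a * p ^ j mod N \<longleftrightarrow> [i = j] (mod ord (N div gcd a N) p)"
proof -
  have "coprime (N div gcd a N) p"
    using ord_div_gcd_pos[OF assms(1)] by simp
  then have "[p ^ i = p ^ j] (mod N div gcd a N) \<longleftrightarrow> [i = j] (mod ord (N div gcd a N) p)"
    by (rule order_divides_expdiff)
  then show ?thesis
    using cong_mult_cancel_gcd_nat[OF assms(2)] unfolding cong_def by simp
qed

lemma cyclotomic_coset_eq_image:
  fixes N p a :: nat
  assumes "coprime p N" "a > 0"
  defines "d \<equiv> ord (N div gcd a N) p"
  shows "cyclotomic_coset N p a = (\<lambda>k. a * p ^ k mod N) ` {..<d}"
    and "inj_on (\<lambda>k. a * p ^ k mod N) {..<d}"
proof -
  have "d > 0"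
    using ord_div_gcd_pos[OF assms(1)] unfolding d_def .
  have "a * p ^ k mod N = a * p ^ (k mod d) mod N" for k
    using mult_power_mod_eq_iff[OF assms(1,2)] unfolding d_def cong_def by simp
  then show "cyclotomic_coset N p a = (\<lambda>k. a * p ^ k mod N) ` {..<d}"
    unfolding cyclotomic_coset_def using \<open>d > 0\<close>
    by (auto intro!: image_eqI[where x = "k mod d" for k])
  show "inj_on (\<lambda>k. a * p ^ k mod N) {..<d}"
    using mult_power_mod_eq_iff[OF assms(1,2)] unfolding d_def cong_def
    by (intro inj_onI) simp
qed

lemma card_cyclotomic_coset:
  fixes N p a :: nat
  assumes "coprime p N" "a > 0"
  shows "card (cyclotomic_coset N p a) = ord (N div gcd a N) p"
  using cyclotomic_coset_eq_image[OF assms] by (simp add: card_image)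

lemma self_in_cyclotomic_coset: "a < N \<Longrightarrow> a \<in> cyclotomic_coset N p a"
  unfolding cyclotomic_coset_def by (auto intro: image_eqI[where x = 0])

lemma cyclotomic_coset_subset:
  assumes "a \<in> S" "a < N" "\<And>b. b \<in> S \<Longrightarrow> p * b mod N \<in> S"
  shows "cyclotomic_coset N p a \<subseteq> S"
proof -
  have "a * p ^ k mod N \<in> S" for k
  proof (induction k)
    case 0
    then show ?case using assms(1,2) by simp
  next
    case (Suc k)
    have "a * p ^ Suc k mod N = p * (a * p ^ k mod N) mod N"
      by (simp add: mod_mult_right_eq ac_simps)
    then show ?case using assms(3)[OF Suc.IH] by simp
  qed
  then show ?thesis unfolding cyclotomic_coset_def by blast
qed

lemma cyclotomic_coset_eq:
  fixes N p a :: nat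
  assumes "coprime p N" "a > 0" "b \<in> cyclotomic_coset N p a"
  shows "cyclotomic_coset N p b = cyclotomic_coset N p a"
proof -
  define d where "d = ord (N div gcd a N) p"
  obtain k where b: "b = a * p ^ k mod N"
    using assms(3) unfolding cyclotomic_coset_def by blast
  have shift: "b * p ^ j mod N = a * p ^ (k + j) mod N" for j
    unfolding b by (metis mod_mult_left_eq power_add mult.assoc)
  have "a * p ^ i mod N = b * p ^ (d * k - k + i) mod N" for i
  proof -
    have "d > 0"
      using ord_div_gcd_pos[OF assms(1)] unfolding d_def .
    then have "k \<le> d * k"
      by simp
    then have "k + (d * k - k + i) = i + d * k"
      by linarith
    then have "[i = k + (d * k - k + i)] (mod d)"
      unfolding cong_def by (simp only:) simp
    then show ?thesis
      unfolding shift using mult_power_mod_eq_iff[OF assms(1,2)] d_def by simp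
  qed
  then show ?thesis
    unfolding cyclotomic_coset_def using shift by auto
qed

lemma dvd_card_if_closed_under_mult:
  fixes N p m :: nat and S :: "nat set"
  assumes "coprime p N" and S: "S \<subseteq> {0<..<N}" "\<And>a. a \<in> S \<Longrightarrow> p * a mod N \<in> S"
    and m: "\<And>n. 1 < n \<Longrightarrow> n dvd N \<Longrightarrow> m dvd ord n p"
  shows "m dvd card S"
proof -
  let ?C = "cyclotomic_coset N p ` S"
  have "\<Union>?C = S"
  proof
    show "\<Union>?C \<subseteq> S"
      using S cyclotomic_coset_subset[of _ S N p] by fastforce
    show "S \<subseteq> \<Union>?C"
      using S self_in_cyclotomic_coset[of _ N p] by fastforce
  qed
  moreover have "m dvd card c" if "c \<in> ?C" for c
  proof -
    obtain a where "a \<in> S" and c: "c = cyclotomic_coset N p a"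
      using \<open>c \<in> ?C\<close> by blast
    then have "0 < a" "a < N" using S by auto
    then have "1 < N div gcd a N"
      by (rule div_gcd_gt_1)
    then show ?thesis
      using m div_gcd_dvd card_cyclotomic_coset[OF assms(1) \<open>0 < a\<close>] c by simp
  qed
  moreover have "c1 \<inter> c2 = {}" if "c1 \<in> ?C" "c2 \<in> ?C" and "c1 \<noteq> c2" for c1 c2
  proof -
    obtain a1 a2 where "a1 \<in> S" "a2 \<in> S"
      and c: "c1 = cyclotomic_coset N p a1" "c2 = cyclotomic_coset N p a2"
      using \<open>c1 \<in> ?C\<close> \<open>c2 \<in> ?C\<close> by blast
    then have "0 < a1" "0 < a2" using S by auto
    show ?thesis
      using cyclotomic_coset_eq[OF assms(1) \<open>0 < a1\<close>] cyclotomic_coset_eq[OF assms(1) \<open>0 < a2\<close>]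
        \<open>c1 \<noteq> c2\<close> unfolding c by blast
  qed
  ultimately show ?thesis
    using dvd_partition[of ?C m] S finite_subset[OF S(1)] by simp
qed

lemma power_card_eq: "(x::'a::{finite,field}) ^ CARD('a) = x"
proof (cases "x = 0")
  case False
  let ?U = "UNIV - {0::'a}"
  have "(\<Prod>y\<in>?U. x * y) = (\<Prod>y\<in>?U. y)"
    by (rule prod.reindex_bij_witness[of _ "\<lambda>y. y / x" "\<lambda>y. x * y"]) (use False in auto)
  then have "x ^ card ?U = 1"
    by (simp add: prod.distrib)
  moreover have "card ?U = CARD('a) - 1"
    by (simp add: card_Diff_singleton)
  ultimately show ?thesis
    by (metis One_nat_def Suc_pred finite_UNIV_card_ge_0 finite mult.right_neutral power_Suc)
qed simp

lemma exponent_pos_if_card_eq_power: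
  assumes "CARD('a::{finite,field}) = p ^ f"
  shows "f > 0"
proof -
  have "card {0::'a, 1} \<le> CARD('a)"
    by (rule card_mono) auto
  then show ?thesis
    using assms by (cases f) auto
qed

lemma primitive_elem_nonzero: "primitive_elem \<gamma> \<Longrightarrow> \<gamma> \<noteq> 0"
  unfolding primitive_elem_def by (metis Diff_iff insertI1 power_one_right rangeI)

lemma frobenius_power_eq:
  fixes x :: "'a::{finite,field}"
  assumes "CARD('a) = p ^ f"
  shows "(x ^ p) ^ (p ^ (f - 1)) = x"
proof -
  have "p * p ^ (f - 1) = CARD('a)"
    using exponent_pos_if_card_eq_power[OF assms] assms by (simp add: power_eq_if)
  then show ?thesis
    by (metis power_mult power_card_eq)
qed

lemma inj_frobenius:
  assumes "CARD('a::{finite,field}) = p ^ f"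
  shows "inj (\<lambda>x::'a. x ^ p)"
  by (rule injI) (metis frobenius_power_eq[OF assms])

lemma abs_trace_frobenius:
  fixes x :: "'a::{finite,field}"
  assumes "CARD('a) = p ^ f"
  shows "abs_trace p f (x ^ p) = abs_trace p f x"
proof -
  have "x + abs_trace p f (x ^ p) = (\<Sum>i<Suc f. x ^ p ^ i)"
    unfolding abs_trace_def by (simp only: sum.lessThan_Suc_shift) (simp add: power_mult[symmetric])
  also have "\<dots> = abs_trace p f x + x"
    using power_card_eq[of x] assms unfolding abs_trace_def by simp
  finally show ?thesis
    by simp
qed

lemma can_add_char_frobenius:
  fixes x :: "'a::{finite,field}"
  assumes "CARD('a) = p ^ f"
  shows "can_add_char p f (x ^ p) = can_add_char p f x"
  unfolding can_add_char_def trace_nat_def abs_trace_frobenius[OF assms] ..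

lemma frobenius_image_coset:
  fixes \<gamma> :: "'a::{finite,field}"
  assumes "CARD('a) = p ^ f" "\<gamma> \<noteq> 0"
  shows "(\<lambda>x. x ^ p) ` (\<lambda>c. \<gamma> ^ a * c) ` cyclo_C0 N \<gamma>
       = (\<lambda>c. \<gamma> ^ (p * a mod N) * c) ` cyclo_C0 N \<gamma>"
proof (rule card_subset_eq)
  show "(\<lambda>x. x ^ p) ` (\<lambda>c. \<gamma> ^ a * c) ` cyclo_C0 N \<gamma>
      \<subseteq> (\<lambda>c. \<gamma> ^ (p * a mod N) * c) ` cyclo_C0 N \<gamma>"
  proof
    fix y
    assume "y \<in> (\<lambda>x. x ^ p) ` (\<lambda>c. \<gamma> ^ a * c) ` cyclo_C0 N \<gamma>"
    then obtain j where y: "y = (\<gamma> ^ a * (\<gamma> ^ N) ^ j) ^ p"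
      unfolding cyclo_C0_def by blast
    have "(\<gamma> ^ a * (\<gamma> ^ N) ^ j) ^ p = \<gamma> ^ (p * a) * (\<gamma> ^ N) ^ (p * j)"
      by (simp add: power_mult_distrib power_mult[symmetric] ac_simps)
    also have "p * a = p * a mod N + N * (p * a div N)"
      by simp
    also have "\<gamma> ^ \<dots> * (\<gamma> ^ N) ^ (p * j) = \<gamma> ^ (p * a mod N) * (\<gamma> ^ N) ^ (p * a div N + p * j)"
      by (simp only: power_add power_mult mult.assoc)
    finally show "y \<in> (\<lambda>c. \<gamma> ^ (p * a mod N) * c) ` cyclo_C0 N \<gamma>"
      unfolding y cyclo_C0_def by blast
  qed
  have "inj_on (\<lambda>c. \<gamma> ^ b * c) C" for b C
    using assms(2) by (auto intro: inj_onI)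
  then show "card ((\<lambda>x. x ^ p) ` (\<lambda>c. \<gamma> ^ a * c) ` cyclo_C0 N \<gamma>)
      = card ((\<lambda>c. \<gamma> ^ (p * a mod N) * c) ` cyclo_C0 N \<gamma>)"
    using inj_frobenius[OF assms(1)] by (simp add: card_image inj_on_subset)
qed simp

lemma gauss_period_frobenius:
  fixes \<gamma> :: "'a::{finite,field}"
  assumes "CARD('a) = p ^ f" "\<gamma> \<noteq> 0"
  shows "gauss_period p f N \<gamma> (p * a mod N) = gauss_period p f N \<gamma> a"
proof -
  have "gauss_period p f N \<gamma> (p * a mod N)
      = (\<Sum>x \<in> (\<lambda>x. x ^ p) ` (\<lambda>c. \<gamma> ^ a * c) ` cyclo_C0 N \<gamma>. can_add_char p f x)"
    unfolding gauss_period_def frobenius_image_coset[OF assms] ..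
  also have "\<dots> = gauss_period p f N \<gamma> a"
    using inj_frobenius[OF assms(1)]
    by (simp add: gauss_period_def sum.reindex inj_on_subset can_add_char_frobenius[OF assms(1)])
  finally show ?thesis .
qed

lemma unique_fibre_card_mod:
  fixes \<eta> :: "nat \<Rightarrow> 'b" and N m :: nat
  defines "I \<equiv> \<lambda>\<alpha>. {a\<in>{0..<N}. \<eta> a = \<alpha>}"
  assumes "N > 0" "m \<ge> 2" "\<And>\<alpha>. m dvd card (I \<alpha> - {0})"
  shows "\<exists>!\<alpha>0\<in>\<eta> ` {0..<N}. card (I \<alpha>0) mod m = 1 \<and>
           (\<forall>\<alpha>\<in>\<eta> ` {0..<N}. \<alpha> \<noteq> \<alpha>0 \<longrightarrow> card (I \<alpha>) mod m = 0)"
proof -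
  have "card (I \<alpha>) = card (I \<alpha> - {0}) + (if \<alpha> = \<eta> 0 then 1 else 0)" for \<alpha>
  proof -
    have "finite (I \<alpha>)" "0 \<in> I \<alpha> \<longleftrightarrow> \<alpha> = \<eta> 0"
      using \<open>N > 0\<close> unfolding I_def by auto
    then show ?thesis
      using card_Suc_Diff1[of "I \<alpha>" 0] by auto
  qed
  then have "card (I \<alpha>) mod m = (if \<alpha> = \<eta> 0 then 1 else 0)" for \<alpha>
    using assms(3) assms(4)[of \<alpha>] by (auto elim!: dvdE simp: mod_Suc)
  then show ?thesis
    using \<open>N > 0\<close> \<open>m \<ge> 2\<close> by (intro ex1I[of _ "\<eta> 0"]) auto
qed

theorem lemma3p3:
  fixes p f N :: nat and \<gamma> :: "'a::{finite,field}"
  assumes "prime p" and "of_nat p = (0::'a)" and "CARD('a) = p ^ f"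
    and "N > 1" and "N dvd (CARD('a) - 1)"
    and "primitive_elem \<gamma>"
  defines "\<eta> \<equiv> gauss_period p f N \<gamma>"
  defines "Vals \<equiv> \<eta> ` {0..<N}"
  defines "I \<equiv> (\<lambda>\<alpha>. {a\<in>{0..<N}. \<eta> a = \<alpha>})"
  shows "(\<forall>\<alpha>\<in>Vals. \<forall>a\<in>I \<alpha>. (p * a) mod N \<in> I \<alpha>)
       \<and> (let m = Gcd {ord n p | n. n > 1 \<and> n dvd N} in
            m \<ge> 2 \<longrightarrow>
            (\<exists>!\<alpha>0\<in>Vals. card (I \<alpha>0) mod m = 1 \<and>
                (\<forall>\<alpha>\<in>Vals. \<alpha> \<noteq> \<alpha>0 \<longrightarrow> card (I \<alpha>) mod m = 0)))"
proof -
  have \<eta>_frobenius: "\<eta> (p * a mod N) = \<eta> a" for a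
    unfolding \<eta>_def using gauss_period_frobenius[OF \<open>CARD('a) = p ^ f\<close>]
      primitive_elem_nonzero[OF \<open>primitive_elem \<gamma>\<close>] by blast
  then have closed: "(p * a) mod N \<in> I \<alpha>" if "a \<in> I \<alpha>" for a \<alpha>
    using that \<open>N > 1\<close> unfolding I_def by auto
  have "coprime p N"
    using \<open>prime p\<close> exponent_pos_if_card_eq_power[OF \<open>CARD('a) = p ^ f\<close>] \<open>N dvd CARD('a) - 1\<close>
    by (intro coprime_if_dvd_power_minus_one) (simp_all add: prime_gt_0_nat \<open>CARD('a) = p ^ f\<close>)
  define m where "m = Gcd {ord n p | n. n > 1 \<and> n dvd N}"
  have "m dvd card (I \<alpha> - {0})" for \<alpha>
  proof (rule dvd_card_if_closed_under_mult[OF \<open>coprime p N\<close>])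
    show "I \<alpha> - {0} \<subseteq> {0<..<N}"
      unfolding I_def by auto
    show "p * a mod N \<in> I \<alpha> - {0}" if "a \<in> I \<alpha> - {0}" for a
      using that closed[of a \<alpha>] mult_mod_pos[OF \<open>coprime p N\<close>, of a] unfolding I_def by auto
    show "m dvd ord n p" if "1 < n" "n dvd N" for n
      unfolding m_def using that by (blast intro: Gcd_dvd)
  qed
  then have "m \<ge> 2 \<longrightarrow> (\<exists>!\<alpha>0\<in>Vals. card (I \<alpha>0) mod m = 1 \<and>
                (\<forall>\<alpha>\<in>Vals. \<alpha> \<noteq> \<alpha>0 \<longrightarrow> card (I \<alpha>) mod m = 0))"
    using unique_fibre_card_mod[of N m \<eta>] \<open>N > 1\<close> unfolding Vals_def I_def by simp
  then show ?thesis
    using closed unfolding m_def Let_def by blast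
qed

end
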